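(* Let $n,k$ be integers with $1\le k<n/2$ and let $\gamma\in\mathrm{Aut}(\mathrm{DGP}(n,k))$. If $\gamma$ stabilizes any of $\mathcal{O},\mathcal{I},\mathcal{S}$ setwise, then it stabilizes $\mathcal{S}$ setwise. Moreover, if $\gamma$ stabilizes $\mathcal{S}$ setwise and either $n$ is odd or $k$ is even, then either $\gamma$ stabilizes each of $\mathcal{O}$ and $\mathcal{I}$ setwise, or $\gamma$ interchanges $\mathcal{O}$ and $\mathcal{I}$.
   Context: $\mathrm{GP}(n,k)$ ($1\le k<n/2$) has vertices $u_0,\dots,u_{n-1},v_0,\dots,v_{n-1}$ and edges $\{u_i,u_{i+1}\},\{u_i,v_i\},\{v_i,v_{i+k}\}$ (subscripts mod $n$). $\mathrm{DGP}(n,k)$ is its canonical double cover: vertex set $\{(u_i,j),(v_i,j): 0\le i\le n-1,\ j\in\{0,1\}\}$ and edges $\{(u_i,j),(u_{i+1},1-j)\}$, $\{(u_i,j),(v_i,1-j)\}$, $\{(v_i,j),(v_{i+k},1-j)\}$ for all $i$ (mod $n$) and $j\in\{0,1\}$. Let $\mathcal{O}=\{\{(u_i,j),(u_{i+1},1-j)\}\}$ (outer edges), $\mathcal{I}=\{\{(v_i,j),(v_{i+k},1-j)\}\}$ (inner edges), $\mathcal{S}=\{\{(u_i,j),(v_i,1-j)\}\}$ (spokes), over all $i\in\{0,\dots,n-1\}$, $j\in\{0,1\}$. *)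

theory Defs
  imports Main
begin

text \<open>Vertices of DGP(n,k): (u_i, j) is represented as U i j, (v_i, j) as V i j,
  with 0 <= i < n and j in {0,1}.\<close>
datatype vert = U nat nat | V nat nat

definition dgp_verts :: "nat \<Rightarrow> vert set" where
  "dgp_verts n = {U i j | i j. i < n \<and> j < 2} \<union> {V i j | i j. i < n \<and> j < 2}"

definition outer_edges :: "nat \<Rightarrow> vert set set" where
  "outer_edges n = {{U i j, U ((i + 1) mod n) (1 - j)} | i j. i < n \<and> j < 2}"

definition inner_edges :: "nat \<Rightarrow> nat \<Rightarrow> vert set set" where
  "inner_edges n k = {{V i j, V ((i + k) mod n) (1 - j)} | i j. i < n \<and> j < 2}"

definition spoke_edges :: "nat \<Rightarrow> vert set set" where
  "spoke_edges n = {{U i j, V i (1 - j)} | i j. i < n \<and> j < 2}"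

definition dgp_edges :: "nat \<Rightarrow> nat \<Rightarrow> vert set set" where
  "dgp_edges n k = outer_edges n \<union> inner_edges n k \<union> spoke_edges n"

definition dgp_aut :: "nat \<Rightarrow> nat \<Rightarrow> (vert \<Rightarrow> vert) \<Rightarrow> bool" where
  "dgp_aut n k g \<longleftrightarrow> bij_betw g (dgp_verts n) (dgp_verts n) \<and>
     (\<forall>x\<in>dgp_verts n. \<forall>y\<in>dgp_verts n.
        ({g x, g y} \<in> dgp_edges n k \<longleftrightarrow> {x, y} \<in> dgp_edges n k))"

definition edge_img :: "(vert \<Rightarrow> vert) \<Rightarrow> vert set set \<Rightarrow> vert set set" where
  "edge_img g E = (\<lambda>e. g ` e) ` E"

end

(*
  Call the u-vertices outer and the v-vertices inner. Then O and I are exactly the edges with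
  both ends outer, respectively inner, and S the edges joining the two sides. If an automorphism
  fixes O, it maps outer vertices (each lies on an outer edge) to outer vertices, so the image of
  a spoke has an outer end but is not an outer edge: it is a spoke. The case of I is symmetric.
  If it fixes S, then whether it switches sides at a vertex is the same at both ends of every
  edge, hence constant on DGP(n,k), which is connected when n is odd or k is even. Keeping sides
  everywhere fixes O and I; switching them everywhere interchanges O and I.
*)
theory Submission
  imports Defs
begin

fun is_outer :: "vert \<Rightarrow> bool" where
  "is_outer (U _ _) = True"
| "is_outer (V _ _) = False"

definition mono_edges :: "nat \<Rightarrow> nat \<Rightarrow> bool \<Rightarrow> vert set set" where
  "mono_edges n k b = {e \<in> dgp_edges n k. \<forall>x\<in>e. is_outer x = b}"

lemma finite_dgp_verts: "finite (dgp_verts n)"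
proof -
  have "dgp_verts n = (\<lambda>(i, j). U i j) ` ({..<n} \<times> {..<2}) \<union> (\<lambda>(i, j). V i j) ` ({..<n} \<times> {..<2})"
    unfolding dgp_verts_def by auto
  then show ?thesis by simp
qed

lemma edge_img_Un: "edge_img g (A \<union> B) = edge_img g A \<union> edge_img g B"
  unfolding edge_img_def by (rule image_Un)

lemma dgp_edges_subset_Pow: "dgp_edges n k \<subseteq> Pow (dgp_verts n)"
  unfolding dgp_edges_def outer_edges_def inner_edges_def spoke_edges_def dgp_verts_def
  by auto

lemma finite_dgp_edges: "finite (dgp_edges n k)"
  using finite_subset[OF dgp_edges_subset_Pow] finite_dgp_verts by blast

lemma dgp_edge_doubleton: "e \<in> dgp_edges n k \<Longrightarrow> \<exists>x y. e = {x, y}"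
  unfolding dgp_edges_def outer_edges_def inner_edges_def spoke_edges_def by auto

lemma dgp_edge_nonempty: "e \<in> dgp_edges n k \<Longrightarrow> e \<noteq> {}"
  unfolding dgp_edges_def outer_edges_def inner_edges_def spoke_edges_def by auto

lemma outer_edges_eq_mono: "outer_edges n = mono_edges n k True"
  unfolding mono_edges_def dgp_edges_def outer_edges_def inner_edges_def spoke_edges_def
  by auto

lemma inner_edges_eq_mono: "inner_edges n k = mono_edges n k False"
  unfolding mono_edges_def dgp_edges_def outer_edges_def inner_edges_def spoke_edges_def
  by auto

lemma mono_edges_disjoint: "b \<noteq> b' \<Longrightarrow> mono_edges n k b \<inter> mono_edges n k b' = {}"
  unfolding mono_edges_def using dgp_edge_nonempty by fastforce

lemma non_spoke_edge_mono:
  "e \<in> dgp_edges n k \<Longrightarrow> e \<notin> spoke_edges n \<Longrightarrow> x \<in> e \<Longrightarrow> e \<in> mono_edges n k (is_outer x)"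
  unfolding mono_edges_def dgp_edges_def outer_edges_def inner_edges_def by auto

lemma spoke_edge_sides:
  "e \<in> spoke_edges n \<Longrightarrow> x \<in> e \<Longrightarrow> y \<in> e \<Longrightarrow> x \<noteq> y \<Longrightarrow> is_outer x \<noteq> is_outer y"
  unfolding spoke_edges_def by auto

lemma spoke_edge_meets_side: "e \<in> spoke_edges n \<Longrightarrow> \<exists>x\<in>e. is_outer x = b"
  unfolding spoke_edges_def by (cases b) auto

lemma outer_edge_mem: "i < n \<Longrightarrow> j < 2 \<Longrightarrow> {U i j, U ((i + 1) mod n) (1 - j)} \<in> dgp_edges n k"
  unfolding dgp_edges_def outer_edges_def by blast

lemma inner_edge_mem: "i < n \<Longrightarrow> j < 2 \<Longrightarrow> {V i j, V ((i + k) mod n) (1 - j)} \<in> dgp_edges n k"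
  unfolding dgp_edges_def inner_edges_def by blast

lemma spoke_edge_mem: "i < n \<Longrightarrow> j < 2 \<Longrightarrow> {U i j, V i (1 - j)} \<in> dgp_edges n k"
  unfolding dgp_edges_def spoke_edges_def by blast

lemma mono_edge_through_vertex:
  "x \<in> dgp_verts n \<Longrightarrow> \<exists>e\<in>mono_edges n k (is_outer x). x \<in> e"
proof -
  assume "x \<in> dgp_verts n"
  then obtain i j where ij: "i < n" "j < 2" "x = U i j \<or> x = V i j"
    unfolding dgp_verts_def by blast
  have "{U i j, U ((i + 1) mod n) (1 - j)} \<in> outer_edges n"
       "{V i j, V ((i + k) mod n) (1 - j)} \<in> inner_edges n k"
    unfolding outer_edges_def inner_edges_def using ij by blast+
  then show ?thesis
    using ij unfolding outer_edges_eq_mono[of n k] inner_edges_eq_mono by auto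
qed

lemma dgp_rim_walk:
  assumes const: "\<And>e x y. e \<in> dgp_edges n k \<Longrightarrow> x \<in> e \<Longrightarrow> y \<in> e \<Longrightarrow> P x = P y"
    and "i < n" "j < 2"
  shows "P (U i j) = P (U ((i + m) mod n) ((j + m) mod 2))"
proof (induction m)
  case 0
  then show ?case using assms by simp
next
  case (Suc m)
  have "P (U ((i + m) mod n) ((j + m) mod 2))
      = P (U (((i + m) mod n + 1) mod n) (1 - (j + m) mod 2))"
    by (rule const[OF outer_edge_mem[where i = "(i + m) mod n" and j = "(j + m) mod 2"]])
      (use \<open>i < n\<close> in simp_all)
  also have "((i + m) mod n + 1) mod n = (i + Suc m) mod n"
    by (simp add: mod_Suc_eq)
  also have "1 - (j + m) mod 2 = (j + Suc m) mod 2"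
    by presburger
  finally show ?case using Suc.IH by simp
qed

lemma dgp_edge_invariant_constant:
  assumes const: "\<And>e x y. e \<in> dgp_edges n k \<Longrightarrow> x \<in> e \<Longrightarrow> y \<in> e \<Longrightarrow> P x = P y"
    and "k < n" and "odd n \<or> even k"
    and x: "x \<in> dgp_verts n"
  shows "P x = P (U 0 0)"
proof -
  have spoke: "P (U i j) = P (V i (1 - j))" if "i < n" "j < 2" for i j
    by (rule const[OF spoke_edge_mem[OF that]]) simp_all
  have walk: "P (U i j) = P (U ((i + m) mod n) ((j + m) mod 2))" if "i < n" "j < 2" for i j m
    using dgp_rim_walk[OF const that] .
  have flip: "P (U a 0) = P (U a 1)" if "a < n" for a
  proof (cases "odd n")
    case True
    then show ?thesis using walk[of a 0 n] that by (simp add: odd_iff_mod_2_eq_one)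
  next
    case False
    then have "even k" using \<open>odd n \<or> even k\<close> by blast
    define i where "i = a + n - k"
    have "i mod n < n" and ik: "(i mod n + k) mod n = a"
      using \<open>k < n\<close> that by (auto simp: i_def mod_add_left_eq)
    \<comment> \<open>As k is even, the rim path of length k from u_i ends in layer 0,
      whereas the path u_i, v_i, v_{i+k}, u_{i+k} ends in layer 1.\<close>
    have "P (U (i mod n) 0) = P (U a 0)"
      using walk[OF \<open>i mod n < n\<close>, of 0 k] ik \<open>even k\<close> by simp
    moreover have "P (U (i mod n) 0) = P (V (i mod n) 1)"
      using spoke[OF \<open>i mod n < n\<close>, of 0] by simp
    moreover have "P (V (i mod n) 1) = P (V ((i mod n + k) mod n) 0)"
      by (rule const[OF inner_edge_mem[where i = "i mod n" and j = 1]])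
        (use \<open>i mod n < n\<close> in simp_all)
    moreover have "P (V a 0) = P (U a 1)"
      using spoke[OF that, of 1] by simp
    ultimately show ?thesis using ik by simp
  qed
  have rim: "P (U a j) = P (U 0 0)" if "a < n" "j < 2" for a j
  proof -
    have "P (U 0 0) = P (U a (a mod 2))"
      using walk[of 0 0 a] that by simp
    moreover have "j = 0 \<or> j = 1" "a mod 2 = 0 \<or> a mod 2 = 1" using that by auto
    ultimately show ?thesis using flip[OF that(1)] by auto
  qed
  from x obtain i j where ij: "i < n" "j < 2" and "x = U i j \<or> x = V i j"
    unfolding dgp_verts_def by blast
  then consider "x = U i j" | "x = V i j" by blast
  then show ?thesis
  proof cases
    case 2
    have "P (V i j) = P (U i (1 - j))" using spoke[of i "1 - j"] ij by simp
    then show ?thesis using 2 rim[of i "1 - j"] ij by simp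
  qed (use rim[OF ij] in simp)
qed

context
  fixes n k :: nat and g :: "vert \<Rightarrow> vert"
  assumes aut: "dgp_aut n k g"
begin

lemma dgp_aut_inj_on: "inj_on g (dgp_verts n)"
  using aut unfolding dgp_aut_def bij_betw_def by blast

lemma dgp_aut_edge_image: "e \<in> dgp_edges n k \<Longrightarrow> g ` e \<in> dgp_edges n k"
proof -
  assume e: "e \<in> dgp_edges n k"
  then obtain x y where xy: "e = {x, y}"
    using dgp_edge_doubleton by blast
  have "x \<in> dgp_verts n" "y \<in> dgp_verts n"
    using e xy dgp_edges_subset_Pow by auto
  then have "{g x, g y} \<in> dgp_edges n k"
    using aut e xy unfolding dgp_aut_def by blast
  then show ?thesis using xy by simp
qed

lemma dgp_aut_inj_on_edges: "inj_on (image g) (dgp_edges n k)"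
  by (rule inj_on_subset[OF inj_on_image_Pow[OF dgp_aut_inj_on] dgp_edges_subset_Pow])

lemma dgp_aut_edge_img_mem_iff:
  "A \<subseteq> dgp_edges n k \<Longrightarrow> e \<in> dgp_edges n k \<Longrightarrow> g ` e \<in> edge_img g A \<longleftrightarrow> e \<in> A"
  unfolding edge_img_def by (rule inj_on_image_mem_iff[OF dgp_aut_inj_on_edges])

lemma dgp_aut_edge_img_eqI:
  assumes "A \<subseteq> dgp_edges n k" and "edge_img g A \<subseteq> A"
  shows "edge_img g A = A"
proof -
  have "finite A" using assms(1) finite_dgp_edges by (rule finite_subset)
  moreover have "inj_on (image g) A" using dgp_aut_inj_on_edges assms(1) by (rule inj_on_subset)
  ultimately show ?thesis using assms(2) unfolding edge_img_def by (simp add: endo_inj_surj)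
qed

lemma spoke_edges_stable_if_mono_stable:
  assumes mono: "edge_img g (mono_edges n k b) = mono_edges n k b"
  shows "edge_img g (spoke_edges n) = spoke_edges n"
proof (rule dgp_aut_edge_img_eqI)
  show S_sub: "spoke_edges n \<subseteq> dgp_edges n k"
    unfolding dgp_edges_def by blast
  have M_sub: "mono_edges n k b \<subseteq> dgp_edges n k"
    unfolding mono_edges_def by blast
  have side: "is_outer (g x) = b" if x: "x \<in> dgp_verts n" and bx: "is_outer x = b" for x
  proof -
    obtain e where "e \<in> mono_edges n k b" "x \<in> e"
      using mono_edge_through_vertex[OF x] bx by blast
    moreover from this have "g ` e \<in> mono_edges n k b"
      using mono unfolding edge_img_def by blast
    ultimately show ?thesis unfolding mono_edges_def by blast
  qed
  show "edge_img g (spoke_edges n) \<subseteq> spoke_edges n"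
  proof
    fix f assume "f \<in> edge_img g (spoke_edges n)"
    then obtain s where s: "s \<in> spoke_edges n" and f: "f = g ` s"
      unfolding edge_img_def by blast
    have sE: "s \<in> dgp_edges n k" using s S_sub by blast
    obtain x where x: "x \<in> s" "is_outer x = b" using spoke_edge_meets_side[OF s] by blast
    obtain y where y: "y \<in> s" "is_outer y = (\<not> b)" using spoke_edge_meets_side[OF s] by blast
    have "s \<notin> mono_edges n k b" using y unfolding mono_edges_def by auto
    then have "f \<notin> mono_edges n k b"
      using dgp_aut_edge_img_mem_iff[OF M_sub sE] mono f by simp
    moreover have "is_outer (g x) = b"
      using side x dgp_edges_subset_Pow sE by blast
    ultimately show "f \<in> spoke_edges n"
      using non_spoke_edge_mono[of f n k "g x"] dgp_aut_edge_image[OF sE] f x by auto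
  qed
qed

lemma side_switch_constant_on_edges:
  assumes spokes: "edge_img g (spoke_edges n) = spoke_edges n"
    and e: "e \<in> dgp_edges n k" and "x \<in> e" "y \<in> e"
  shows "(is_outer (g x) = is_outer x) = (is_outer (g y) = is_outer y)"
proof (cases "x = y")
  case False
  have S_sub: "spoke_edges n \<subseteq> dgp_edges n k"
    unfolding dgp_edges_def by blast
  have "g x \<noteq> g y"
    using dgp_aut_inj_on False \<open>x \<in> e\<close> \<open>y \<in> e\<close> e dgp_edges_subset_Pow
    unfolding inj_on_def by blast
  have gS: "g ` e \<in> spoke_edges n \<longleftrightarrow> e \<in> spoke_edges n"
    using dgp_aut_edge_img_mem_iff[OF S_sub e] spokes by simp
  show ?thesis
  proof (cases "e \<in> spoke_edges n")
    case True
    then show ?thesis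
      using spoke_edge_sides[of e n x y] spoke_edge_sides[of "g ` e" n "g x" "g y"]
        gS False \<open>g x \<noteq> g y\<close> \<open>x \<in> e\<close> \<open>y \<in> e\<close> by auto
  next
    case False
    then have "e \<in> mono_edges n k (is_outer x)" "g ` e \<in> mono_edges n k (is_outer (g x))"
      using non_spoke_edge_mono dgp_aut_edge_image[OF e] gS e \<open>x \<in> e\<close> by auto
    then show ?thesis using \<open>y \<in> e\<close> unfolding mono_edges_def by auto
  qed
qed simp

lemma edge_img_mono_edges:
  assumes side: "\<And>x. x \<in> dgp_verts n \<Longrightarrow> is_outer (g x) = (is_outer x = c)"
  shows "edge_img g (mono_edges n k b) = mono_edges n k (b = c)"
proof -
  let ?M = "mono_edges n k"
  have maps: "edge_img g (?M b') \<subseteq> ?M (b' = c)" for b'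
  proof
    fix f assume "f \<in> edge_img g (?M b')"
    then obtain e where e: "e \<in> ?M b'" and f: "f = g ` e"
      unfolding edge_img_def by blast
    then have eE: "e \<in> dgp_edges n k" and "\<forall>x\<in>e. is_outer x = b'"
      unfolding mono_edges_def by auto
    then have "\<forall>x\<in>e. is_outer (g x) = (b' = c)"
      using side dgp_edges_subset_Pow by blast
    then show "f \<in> ?M (b' = c)"
      using dgp_aut_edge_image[OF eE] f unfolding mono_edges_def by blast
  qed
  have sub: "?M b \<union> ?M (\<not> b) \<subseteq> dgp_edges n k"
    unfolding mono_edges_def by blast
  have union: "?M (b = c) \<union> ?M ((\<not> b) = c) = ?M b \<union> ?M (\<not> b)"
    by (cases b; cases c) (simp_all add: Un_commute)
  have "edge_img g (?M b \<union> ?M (\<not> b)) \<subseteq> ?M (b = c) \<union> ?M ((\<not> b) = c)"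
    unfolding edge_img_Un by (rule Un_mono[OF maps maps])
  then have "edge_img g (?M b \<union> ?M (\<not> b)) = ?M b \<union> ?M (\<not> b)"
    using dgp_aut_edge_img_eqI[OF sub] union by simp
  then have "edge_img g (?M b) \<union> edge_img g (?M (\<not> b)) = ?M (b = c) \<union> ?M ((\<not> b) = c)"
    using union by (simp add: edge_img_Un)
  moreover have "?M (b = c) \<inter> ?M ((\<not> b) = c) = {}"
    by (rule mono_edges_disjoint) simp
  moreover have "hA \<union> hB = A \<union> B \<Longrightarrow> A \<inter> B = {} \<Longrightarrow> hA \<subseteq> A \<Longrightarrow> hB \<subseteq> B \<Longrightarrow> hA = A"
    for hA hB A B :: "vert set set"
    by blast
  ultimately show ?thesis
    using maps[of b] maps[of "\<not> b"] by blast
qed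

end

theorem lemma5p1:
  fixes n k :: nat and g :: "vert \<Rightarrow> vert"
  assumes "1 \<le> k" and "2 * k < n"
    and "dgp_aut n k g"
  shows "((edge_img g (outer_edges n) = outer_edges n \<or>
           edge_img g (inner_edges n k) = inner_edges n k \<or>
           edge_img g (spoke_edges n) = spoke_edges n)
            \<longrightarrow> edge_img g (spoke_edges n) = spoke_edges n) \<and>
         (edge_img g (spoke_edges n) = spoke_edges n \<and> (odd n \<or> even k)
            \<longrightarrow> (edge_img g (outer_edges n) = outer_edges n \<and>
                 edge_img g (inner_edges n k) = inner_edges n k)
              \<or> (edge_img g (outer_edges n) = inner_edges n k \<and>
                 edge_img g (inner_edges n k) = outer_edges n))"
  unfolding outer_edges_eq_mono[of n k] inner_edges_eq_mono[of n k]
proof (intro conjI impI)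
  show "edge_img g (spoke_edges n) = spoke_edges n"
    if "edge_img g (mono_edges n k True) = mono_edges n k True
        \<or> edge_img g (mono_edges n k False) = mono_edges n k False
        \<or> edge_img g (spoke_edges n) = spoke_edges n"
    using that spoke_edges_stable_if_mono_stable[OF assms(3)] by blast
next
  assume spokes: "edge_img g (spoke_edges n) = spoke_edges n \<and> (odd n \<or> even k)"
  define c where "c = (is_outer (g (U 0 0)) = is_outer (U 0 0))"
  have "is_outer (g x) = (is_outer x = c)" if "x \<in> dgp_verts n" for x
    using dgp_edge_invariant_constant[where P = "\<lambda>x. is_outer (g x) = is_outer x", OF
        side_switch_constant_on_edges[OF assms(3)] _ _ that] spokes assms(2)
    unfolding c_def by auto
  then have "edge_img g (mono_edges n k b) = mono_edges n k (b = c)" for b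
    using edge_img_mono_edges[OF assms(3)] by blast
  then show "(edge_img g (mono_edges n k True) = mono_edges n k True
        \<and> edge_img g (mono_edges n k False) = mono_edges n k False)
      \<or> (edge_img g (mono_edges n k True) = mono_edges n k False
        \<and> edge_img g (mono_edges n k False) = mono_edges n k True)"
    by (cases c) auto
qed

end
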